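(* Let $V_0,V_1,\dots,V_k$ be smooth vector fields on $\mathbb{R}^k$, $L=\sum_{i=1}^kV_i^2+V_0$, and let $\sigma=(\sigma_1,\dots,\sigma_k):\mathbb{R}^k\to\mathbb{R}^k$ be a $C^1$ map with \[C_\sigma:=\sup_{p\in\mathbb{R}^k}\Big(\sum_{i,j=1}^k(V_i\sigma_j(p))^2\Big)^{1/2}<\infty .\] On functions $f(p,\xi)$, $p,\xi\in\mathbb{R}^k$, let $\mathcal{L}=L+\sum_{i=1}^k\sigma_i(p)\frac{\partial}{\partial\xi_i}$ (with $L$ acting in $p$). Define $\Gamma(f)=\frac12(\mathcal{L}f^2-2f\mathcal{L}f)$, $\Gamma_2(f)=\frac12(\mathcal{L}\Gamma(f)-2\Gamma(f,\mathcal{L}f))$, $\Gamma^L(f)=\frac12(Lf^2-2fLf)$, $\Gamma_2^L(f)=\frac12(L\Gamma^L(f)-2\Gamma^L(f,Lf))$, $\Gamma^Z(f)=\|\nabla_\xi f\|^2$ and $\Gamma_2^Z(f)=\frac12(\mathcal{L}\Gamma^Z(f)-2\Gamma^Z(f,\mathcal{L}f))$, bilinear versions being obtained by polarization. If for some $\rho\in\mathbb{R}$ we have $\Gamma_2^L(f)\ge\rho\,\Gamma^L(f)$ for all smooth $f$, then for every $f\in C^\infty(\mathbb{R}^k\times\mathbb{R}^k)$, \[\Gamma_2(f)\ge\Big(\rho-\frac{C_\sigma}{2}\Big)\Gamma(f)-\frac{C_\sigma}{2}\Gamma^Z(f),\qquad\Gamma_2^Z(f)\ge0 .\]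
   Context: $\nabla_\xi$ denotes the Euclidean gradient in the variable $\xi\in\mathbb{R}^k$ and $\|\cdot\|$ the Euclidean norm. *)

theory Defs
  imports "HOL-Analysis.Analysis"
begin

definition dderiv :: "'a::real_normed_vector \<Rightarrow> ('a \<Rightarrow> real) \<Rightarrow> 'a \<Rightarrow> real" where
  "dderiv v g x = frechet_derivative g (at x) v"

definition smooth :: "('a::real_normed_vector \<Rightarrow> real) \<Rightarrow> bool" where
  "smooth g \<longleftrightarrow> (\<forall>vs x. foldr dderiv vs g differentiable (at x))"

definition smooth_vf :: "(real^'k \<Rightarrow> real^'k) \<Rightarrow> bool" where
  "smooth_vf V \<longleftrightarrow> (\<forall>j. smooth (\<lambda>p. V p $ j))"

definition C1_map :: "(real^'k \<Rightarrow> real^'k) \<Rightarrow> bool" where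
  "C1_map s \<longleftrightarrow> (\<forall>x. s differentiable (at x)) \<and>
      (\<forall>v. continuous_on UNIV (\<lambda>x. frechet_derivative s (at x) v))"

definition vf_app :: "(real^'k \<Rightarrow> real^'k) \<Rightarrow> (real^'k \<Rightarrow> real) \<Rightarrow> real^'k \<Rightarrow> real" where
  "vf_app V g p = frechet_derivative g (at p) (V p)"

definition Lop :: "('k::finite \<Rightarrow> real^'k \<Rightarrow> real^'k) \<Rightarrow> (real^'k \<Rightarrow> real^'k)
    \<Rightarrow> (real^'k \<Rightarrow> real) \<Rightarrow> real^'k \<Rightarrow> real" where
  "Lop V V0 g p = (\<Sum>i\<in>UNIV. vf_app (V i) (vf_app (V i) g) p) + vf_app V0 g p"

definition GammaL_bil where
  "GammaL_bil V V0 f g p =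
     (Lop V V0 (\<lambda>q. f q * g q) p - f p * Lop V V0 g p - g p * Lop V V0 f p) / 2"

definition GammaL where
  "GammaL V V0 f p = (Lop V V0 (\<lambda>q. (f q)\<^sup>2) p - 2 * f p * Lop V V0 f p) / 2"

definition Gamma2L where
  "Gamma2L V V0 f p =
     (Lop V V0 (GammaL V V0 f) p - 2 * GammaL_bil V V0 f (Lop V V0 f) p) / 2"

definition pvf_app :: "(real^'k \<Rightarrow> real^'k) \<Rightarrow> ((real^'k) \<times> (real^'k) \<Rightarrow> real)
    \<Rightarrow> (real^'k) \<times> (real^'k) \<Rightarrow> real" where
  "pvf_app V g z = frechet_derivative g (at z) (V (fst z), 0)"

definition dxi :: "'k::finite \<Rightarrow> ((real^'k) \<times> (real^'k) \<Rightarrow> real) \<Rightarrow> (real^'k) \<times> (real^'k) \<Rightarrow> real" where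
  "dxi i g z = frechet_derivative g (at z) (0, axis i 1)"

definition calL :: "('k::finite \<Rightarrow> real^'k \<Rightarrow> real^'k) \<Rightarrow> (real^'k \<Rightarrow> real^'k)
    \<Rightarrow> (real^'k \<Rightarrow> real^'k) \<Rightarrow> ((real^'k) \<times> (real^'k) \<Rightarrow> real) \<Rightarrow> (real^'k) \<times> (real^'k) \<Rightarrow> real" where
  "calL V V0 \<sigma> g z = (\<Sum>i\<in>UNIV. pvf_app (V i) (pvf_app (V i) g) z) + pvf_app V0 g z
      + (\<Sum>i\<in>UNIV. \<sigma> (fst z) $ i * dxi i g z)"

definition Gamma where
  "Gamma V V0 \<sigma> f z = (calL V V0 \<sigma> (\<lambda>w. (f w)\<^sup>2) z - 2 * f z * calL V V0 \<sigma> f z) / 2"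

text \<open>Bilinear carre du champ of calL in its first-order form:
  for smooth f, g this equals (calL(fg) - f calL g - g calL f)/2; it is used with
  g = calL f, which is only C^1 in p when sigma is C^1.\<close>
definition Gamma_bil where
  "Gamma_bil V f g z = (\<Sum>i\<in>UNIV. pvf_app (V i) f z * pvf_app (V i) g z)"

definition Gamma2 where
  "Gamma2 V V0 \<sigma> f z =
     (calL V V0 \<sigma> (Gamma V V0 \<sigma> f) z - 2 * Gamma_bil V f (calL V V0 \<sigma> f) z) / 2"

definition GammaZ where
  "GammaZ f z = (\<Sum>i\<in>UNIV. (dxi i f z)\<^sup>2)"

definition GammaZ_bil where
  "GammaZ_bil f g z = (\<Sum>i\<in>UNIV. dxi i f z * dxi i g z)"

definition Gamma2Z where
  "Gamma2Z V V0 \<sigma> f z =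
     (calL V V0 \<sigma> (GammaZ f) z - 2 * GammaZ_bil f (calL V V0 \<sigma> f) z) / 2"

definition sigma_grad_norm :: "('k::finite \<Rightarrow> real^'k \<Rightarrow> real^'k) \<Rightarrow> (real^'k \<Rightarrow> real^'k) \<Rightarrow> real^'k \<Rightarrow> real" where
  "sigma_grad_norm V \<sigma> p =
     sqrt (\<Sum>i\<in>UNIV. \<Sum>j\<in>UNIV. (vf_app (V i) (\<lambda>q. \<sigma> q $ j) p)\<^sup>2)"

end

theory Submission
  imports Defs
begin

(* For smooth f the drift sigma . grad_xi is a first-order operator, so
   Gamma(f) = sum_i (V_i f)^2 with V_i acting in p. Neither the fields nor sigma depend on xi,
   so d/dxi_j commutes with every V_i and with calL; this gives Gamma2^Z(f) = sum_j Gamma(d f/dxi_j) >= 0.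
   In Gamma2(f) the only new contribution compared with Gamma2^L of the slice f(., xi) comes from
   the commutators [V_i, sigma . grad_xi] f = sum_j (V_i sigma_j) df/dxi_j, so
   Gamma2(f) = Gamma2^L(f(., xi)) - sum_ij V_i f (V_i sigma_j) df/dxi_j.
   The curvature hypothesis bounds the first term by rho Gamma(f), and Cauchy-Schwarz followed by
   AM-GM bounds the cross term by C_sigma/2 (Gamma(f) + Gamma^Z(f)). *)

section \<open>Directional derivatives and smoothness\<close>

lemma dderiv_has_derivative:
  "g differentiable (at x) \<Longrightarrow> (g has_derivative (\<lambda>v. dderiv v g x)) (at x)"
  unfolding dderiv_def using frechet_derivative_works by auto

lemma dderiv_eq_derivative: "(g has_derivative g') (at x) \<Longrightarrow> dderiv v g x = g' v"
  unfolding dderiv_def using frechet_derivative_at by metis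

lemma dderiv_add:
  "g differentiable (at x) \<Longrightarrow> h differentiable (at x) \<Longrightarrow>
   dderiv v (\<lambda>y. g y + h y) x = dderiv v g x + dderiv v h x"
  by (rule dderiv_eq_derivative[where g'="\<lambda>v. dderiv v g x + dderiv v h x", simplified])
     (intro has_derivative_add dderiv_has_derivative)

lemma dderiv_mult:
  fixes g h :: "'a::real_normed_vector \<Rightarrow> real"
  shows "g differentiable (at x) \<Longrightarrow> h differentiable (at x) \<Longrightarrow>
   dderiv v (\<lambda>y. g y * h y) x = g x * dderiv v h x + dderiv v g x * h x"
  by (rule dderiv_eq_derivative[where g'="\<lambda>v. g x * dderiv v h x + dderiv v g x * h x", simplified])
     (intro has_derivative_mult dderiv_has_derivative)

lemma dderiv_power2:
  fixes g :: "'a::real_normed_vector \<Rightarrow> real"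
  shows "g differentiable (at x) \<Longrightarrow> dderiv v (\<lambda>y. (g y)\<^sup>2) x = 2 * g x * dderiv v g x"
  using dderiv_mult[of g x g v] by (simp add: power2_eq_square)

lemma dderiv_const [simp]: "dderiv v (\<lambda>y. c) x = 0"
  by (rule dderiv_eq_derivative[where g'="\<lambda>v. 0", simplified]) (rule has_derivative_const)

lemma dderiv_sum:
  "finite I \<Longrightarrow> (\<And>i. i \<in> I \<Longrightarrow> f i differentiable (at x)) \<Longrightarrow>
   dderiv v (\<lambda>y. \<Sum>i\<in>I. f i y) x = (\<Sum>i\<in>I. dderiv v (f i) x)"
  by (rule dderiv_eq_derivative[where g'="\<lambda>v. \<Sum>i\<in>I. dderiv v (f i) x", simplified])
     (intro has_derivative_sum dderiv_has_derivative)

lemma linear_dderiv: "g differentiable (at x) \<Longrightarrow> linear (\<lambda>v. dderiv v g x)"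
  unfolding dderiv_def using linear_frechet_derivative by auto

lemma dderiv_zero: "g differentiable (at x) \<Longrightarrow> dderiv 0 g x = 0"
  using linear_0[OF linear_dderiv] by auto

lemma dderiv_basis_expansion:
  fixes g :: "'a::euclidean_space \<Rightarrow> real"
  assumes "g differentiable (at x)"
  shows "dderiv u g x = (\<Sum>b\<in>Basis. (u \<bullet> b) * dderiv b g x)"
proof -
  have "dderiv (\<Sum>b\<in>Basis. (u \<bullet> b) *\<^sub>R b) g x = (\<Sum>b\<in>Basis. (u \<bullet> b) * dderiv b g x)"
    by (simp add: linear_sum[OF linear_dderiv[OF assms]] linear_scale[OF linear_dderiv[OF assms]])
  then show ?thesis by (simp add: euclidean_representation)
qed

lemma has_derivative_comp_fst:
  assumes "c differentiable (at (fst z))"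
  shows "((\<lambda>z. c (fst z)) has_derivative (\<lambda>v. dderiv (fst v) c (fst z))) (at z)"
  using has_derivative_compose[OF has_derivative_fst[OF has_derivative_ident]
      dderiv_has_derivative[OF assms]]
  by simp

lemma dderiv_comp_fst:
  assumes "c differentiable (at (fst z))"
  shows "dderiv v (\<lambda>z. c (fst z)) z = dderiv (fst v) c (fst z)"
  using dderiv_eq_derivative[OF has_derivative_comp_fst[OF assms]] by simp

lemma differentiable_comp_fst:
  fixes c :: "'a::real_normed_vector \<Rightarrow> real"
  assumes "c differentiable (at (fst z))"
  shows "(\<lambda>z. c (fst z)) differentiable (at z)"
  using has_derivative_comp_fst[OF assms] unfolding differentiable_def by blast

lemma has_derivative_slice:
  "F differentiable (at (p, \<xi>)) \<Longrightarrow>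
   ((\<lambda>p. F (p, \<xi>)) has_derivative (\<lambda>u. dderiv (u, 0) F (p, \<xi>))) (at p)"
proof -
  assume F: "F differentiable (at (p, \<xi>))"
  have "((\<lambda>p. (p, \<xi>)) has_derivative (\<lambda>u. (u, 0))) (at p)"
    by (intro has_derivative_Pair has_derivative_ident has_derivative_const)
  from has_derivative_compose[OF this dderiv_has_derivative[OF F]] show ?thesis by simp
qed

lemma dderiv_slice:
  assumes "F differentiable (at (p, \<xi>))"
  shows "dderiv u (\<lambda>p. F (p, \<xi>)) p = dderiv (u, 0) F (p, \<xi>)"
  using dderiv_eq_derivative[OF has_derivative_slice[OF assms]] by simp

lemma differentiable_slice:
  fixes F :: "'a::real_normed_vector \<times> 'b::real_normed_vector \<Rightarrow> real"
  assumes "F differentiable (at (p, \<xi>))"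
  shows "(\<lambda>p. F (p, \<xi>)) differentiable (at p)"
  using has_derivative_slice[OF assms] unfolding differentiable_def by blast

lemma smooth_imp_differentiable: "smooth g \<Longrightarrow> g differentiable (at x)"
  unfolding smooth_def by (metis foldr_Nil id_apply)

lemma smooth_dderiv: "smooth g \<Longrightarrow> smooth (dderiv v g)"
  unfolding smooth_def by (metis foldr_append foldr_Cons foldr_Nil comp_id id_apply)

lemma smooth_foldr_dderiv: "smooth g \<Longrightarrow> smooth (foldr dderiv vs g)"
  unfolding smooth_def by (metis foldr_append)

definition differentiable_upto :: "nat \<Rightarrow> ('a::real_normed_vector \<Rightarrow> real) \<Rightarrow> bool" where
  "differentiable_upto n g \<longleftrightarrow>
     (\<forall>vs x. length vs \<le> n \<longrightarrow> foldr dderiv vs g differentiable (at x))"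

lemma smooth_iff_differentiable_upto: "smooth g \<longleftrightarrow> (\<forall>n. differentiable_upto n g)"
  unfolding smooth_def differentiable_upto_def by auto

lemma foldr_dderiv_add:
  assumes "differentiable_upto n A" "differentiable_upto n B" "length vs \<le> n"
  shows "foldr dderiv vs (\<lambda>x. A x + B x) = (\<lambda>x. foldr dderiv vs A x + foldr dderiv vs B x)"
  using assms(3)
proof (induction vs)
  case (Cons v vs)
  then have "foldr dderiv vs A differentiable (at x)" "foldr dderiv vs B differentiable (at x)" for x
    using assms(1,2) unfolding differentiable_upto_def by auto
  with Cons show ?case by (auto intro!: ext dderiv_add)
qed simp

lemma differentiable_upto_add:
  "differentiable_upto n A \<Longrightarrow> differentiable_upto n B \<Longrightarrow> differentiable_upto n (\<lambda>x. A x + B x)"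
  unfolding differentiable_upto_def[of n "\<lambda>x. A x + B x"]
  by (simp add: foldr_dderiv_add differentiable_add)
     (auto simp: differentiable_upto_def intro: differentiable_add)

lemma smooth_add: "smooth A \<Longrightarrow> smooth B \<Longrightarrow> smooth (\<lambda>x. A x + B x)"
  using differentiable_upto_add smooth_iff_differentiable_upto by metis

lemma smooth_const: "smooth (\<lambda>x. c)"
  unfolding smooth_def
proof (intro allI)
  fix vs :: "'a list" and x
  have "\<exists>c'. foldr dderiv vs (\<lambda>x. c) = (\<lambda>x. c')"
    by (induction vs) auto
  then show "foldr dderiv vs (\<lambda>x. c) differentiable (at x)" by auto
qed

lemma differentiable_upto_mult:
  fixes g h :: "'a::real_normed_vector \<Rightarrow> real"
  shows "smooth g \<Longrightarrow> smooth h \<Longrightarrow> differentiable_upto n (\<lambda>x. g x * h x)"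
proof (induction n arbitrary: g h)
  case 0
  then show ?case
    unfolding differentiable_upto_def by (auto intro: differentiable_mult smooth_imp_differentiable)
next
  case (Suc n)
  show ?case unfolding differentiable_upto_def
  proof (intro allI impI)
    fix vs :: "'a list" and x assume len: "length vs \<le> Suc n"
    show "foldr dderiv vs (\<lambda>x. g x * h x) differentiable (at x)"
    proof (cases vs rule: rev_exhaust)
      case Nil
      then show ?thesis using Suc.prems by (auto intro: differentiable_mult smooth_imp_differentiable)
    next
      case (snoc ws v)
      have "dderiv v (\<lambda>x. g x * h x) = (\<lambda>x. g x * dderiv v h x + dderiv v g x * h x)"
        using Suc.prems by (auto intro!: ext dderiv_mult smooth_imp_differentiable)
      moreover have "differentiable_upto n (\<lambda>x. g x * dderiv v h x + dderiv v g x * h x)"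
        using Suc smooth_dderiv by (intro differentiable_upto_add) blast+
      ultimately show ?thesis using len snoc unfolding differentiable_upto_def by simp
    qed
  qed
qed

lemma smooth_mult: "smooth g \<Longrightarrow> smooth h \<Longrightarrow> smooth (\<lambda>x. (g x :: real) * h x)"
  using differentiable_upto_mult smooth_iff_differentiable_upto by blast

lemma smooth_power2: "smooth g \<Longrightarrow> smooth (\<lambda>x. (g x)\<^sup>2)"
  using smooth_mult[of g g] by (simp add: power2_eq_square)

lemma smooth_sum: "finite I \<Longrightarrow> (\<And>i. i \<in> I \<Longrightarrow> smooth (f i)) \<Longrightarrow> smooth (\<lambda>x. \<Sum>i\<in>I. f i x)"
  by (induction I rule: finite_induct) (auto intro: smooth_const smooth_add)

lemma smooth_comp_fst:
  assumes "smooth c"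
  shows "smooth (\<lambda>z :: 'a::real_normed_vector \<times> 'b::real_normed_vector. c (fst z))"
proof -
  have "foldr dderiv vs (\<lambda>z :: 'a \<times> 'b. c (fst z)) = (\<lambda>z. foldr dderiv (map fst vs) c (fst z))" for vs
    by (induction vs)
       (auto intro!: ext dderiv_comp_fst smooth_imp_differentiable smooth_foldr_dderiv assms)
  then show ?thesis
    using assms unfolding smooth_def by (auto intro: differentiable_comp_fst)
qed

lemma smooth_slice:
  assumes "smooth F"
  shows "smooth (\<lambda>p. F (p, \<xi>))"
proof -
  have "foldr dderiv vs (\<lambda>p. F (p, \<xi>)) = (\<lambda>p. foldr dderiv (map (\<lambda>u. (u, 0)) vs) F (p, \<xi>))" for vs
    by (induction vs)
       (auto intro!: ext dderiv_slice smooth_imp_differentiable smooth_foldr_dderiv assms)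
  then show ?thesis
    using assms unfolding smooth_def by (auto intro: differentiable_slice)
qed

section \<open>Symmetry of second derivatives\<close>

lemma has_field_derivative_along_line:
  fixes g :: "'a::real_normed_vector \<Rightarrow> real"
  assumes "g differentiable (at (a + s *\<^sub>R v))"
  shows "((\<lambda>s. g (a + s *\<^sub>R v)) has_field_derivative dderiv v g (a + s *\<^sub>R v)) (at s)"
proof -
  have "((\<lambda>s. a + s *\<^sub>R v) has_derivative (\<lambda>r. r *\<^sub>R v)) (at s)"
    by (auto intro!: derivative_eq_intros)
  from has_derivative_compose[OF this dderiv_has_derivative[OF assms]]
  have "((\<lambda>s. g (a + s *\<^sub>R v)) has_derivative (\<lambda>r. dderiv (r *\<^sub>R v) g (a + s *\<^sub>R v))) (at s)"
    by simp
  moreover have "(\<lambda>r. dderiv (r *\<^sub>R v) g (a + s *\<^sub>R v)) = (*) (dderiv v g (a + s *\<^sub>R v))"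
    using linear_scale[OF linear_dderiv[OF assms]] by (auto simp: mult.commute)
  ultimately show ?thesis unfolding has_field_derivative_def by simp
qed

lemma second_difference_mean_value:
  fixes h :: "'a::real_normed_vector \<Rightarrow> real"
  assumes h: "smooth h" and t: "t > 0"
  shows "\<exists>y. norm (y - x) \<le> t * (norm u + norm w) \<and>
    h (x + t *\<^sub>R u + t *\<^sub>R w) - h (x + t *\<^sub>R u) - h (x + t *\<^sub>R w) + h x
      = t * t * dderiv u (dderiv w h) y"
proof -
  define \<phi> where "\<phi> s = h (x + t *\<^sub>R u + s *\<^sub>R w) - h (x + s *\<^sub>R w)" for s
  have "DERIV \<phi> s :> dderiv w h (x + t *\<^sub>R u + s *\<^sub>R w) - dderiv w h (x + s *\<^sub>R w)" for s
    unfolding \<phi>_def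
    by (intro DERIV_diff has_field_derivative_along_line smooth_imp_differentiable h)
  then obtain s where s: "0 < s" "s < t"
    "\<phi> t - \<phi> 0 = t * (dderiv w h (x + t *\<^sub>R u + s *\<^sub>R w) - dderiv w h (x + s *\<^sub>R w))"
    using MVT2[OF t, of \<phi>] by force
  define \<psi> where "\<psi> r = dderiv w h (x + s *\<^sub>R w + r *\<^sub>R u)" for r
  have "DERIV \<psi> r :> dderiv u (dderiv w h) (x + s *\<^sub>R w + r *\<^sub>R u)" for r
    unfolding \<psi>_def
    by (intro has_field_derivative_along_line smooth_imp_differentiable smooth_dderiv h)
  then obtain r where r: "0 < r" "r < t"
    "\<psi> t - \<psi> 0 = t * dderiv u (dderiv w h) (x + s *\<^sub>R w + r *\<^sub>R u)"
    using MVT2[OF t, of \<psi>] by force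
  define y where "y = x + s *\<^sub>R w + r *\<^sub>R u"
  have "norm (y - x) \<le> s * norm w + r * norm u"
    using norm_triangle_ineq[of "s *\<^sub>R w" "r *\<^sub>R u"] s r by (simp add: y_def)
  also have "\<dots> \<le> t * norm w + t * norm u"
    using s r by (intro add_mono mult_right_mono) auto
  finally have "norm (y - x) \<le> t * (norm u + norm w)" by (simp add: algebra_simps)
  moreover have "\<psi> t = dderiv w h (x + t *\<^sub>R u + s *\<^sub>R w)" "\<psi> 0 = dderiv w h (x + s *\<^sub>R w)"
    unfolding \<psi>_def by (simp_all add: algebra_simps)
  then have "\<phi> t - \<phi> 0 = t * t * dderiv u (dderiv w h) y"
    using s(3) r(3) unfolding y_def by simp
  moreover have "\<phi> t - \<phi> 0 = h (x + t *\<^sub>R u + t *\<^sub>R w) - h (x + t *\<^sub>R u) - h (x + t *\<^sub>R w) + h x"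
    unfolding \<phi>_def by simp
  ultimately show ?thesis by metis
qed

text \<open>Schwarz's theorem: both mixed derivatives are limits of the same second difference
  quotient, by continuity of the second derivatives.\<close>

lemma dderiv_commute:
  fixes h :: "'a::real_normed_vector \<Rightarrow> real"
  assumes h: "smooth h"
  shows "dderiv u (dderiv w h) x = dderiv w (dderiv u h) x"
proof (rule ccontr)
  let ?A = "dderiv u (dderiv w h) x" and ?B = "dderiv w (dderiv u h) x"
  assume "?A \<noteq> ?B"
  define e where "e = \<bar>?A - ?B\<bar> / 2"
  have e: "e > 0" using \<open>?A \<noteq> ?B\<close> unfolding e_def by simp
  have "continuous (at x) (dderiv u (dderiv w h))" "continuous (at x) (dderiv w (dderiv u h))"
    by (intro differentiable_imp_continuous_within smooth_imp_differentiable smooth_dderiv h)+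
  then obtain d1 d2 where d: "d1 > 0" "d2 > 0"
    and d1: "\<And>y. dist y x < d1 \<Longrightarrow> dist (dderiv u (dderiv w h) y) ?A < e"
    and d2: "\<And>y. dist y x < d2 \<Longrightarrow> dist (dderiv w (dderiv u h) y) ?B < e"
    using e unfolding continuous_at_eps_delta by blast
  define t where "t = min d1 d2 / (2 * (norm u + norm w + 1))"
  have n: "norm u + norm w + 1 > 0" by (simp add: add_nonneg_pos)
  have t: "t > 0" unfolding t_def using d n by simp
  have "t * (norm u + norm w) \<le> t * (norm u + norm w + 1)" using t by simp
  also have "\<dots> = min d1 d2 / 2" unfolding t_def using n by (simp add: field_simps)
  also have "\<dots> < min d1 d2" using d by (simp add: min_def)
  finally have small: "t * (norm u + norm w) < min d1 d2" .
  obtain y1 where y1: "norm (y1 - x) \<le> t * (norm u + norm w)"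
    "h (x + t *\<^sub>R u + t *\<^sub>R w) - h (x + t *\<^sub>R u) - h (x + t *\<^sub>R w) + h x
      = t * t * dderiv u (dderiv w h) y1"
    using second_difference_mean_value[OF h t] by blast
  obtain y2 where y2: "norm (y2 - x) \<le> t * (norm w + norm u)"
    "h (x + t *\<^sub>R w + t *\<^sub>R u) - h (x + t *\<^sub>R w) - h (x + t *\<^sub>R u) + h x
      = t * t * dderiv w (dderiv u h) y2"
    using second_difference_mean_value[OF h t] by blast
  have "t * t * dderiv u (dderiv w h) y1 = t * t * dderiv w (dderiv u h) y2"
    using y1(2) y2(2) by (simp add: algebra_simps)
  then have eq: "dderiv u (dderiv w h) y1 = dderiv w (dderiv u h) y2" using t by simp
  have "dist y1 x < d1" using y1(1) small by (simp add: dist_norm)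
  then have a: "\<bar>dderiv u (dderiv w h) y1 - ?A\<bar> < e" using d1 by (simp add: dist_real_def)
  have "dist y2 x < d2" using y2(1) small by (simp add: dist_norm add.commute)
  then have b: "\<bar>dderiv w (dderiv u h) y2 - ?B\<bar> < e" using d2 by (simp add: dist_real_def)
  have "\<bar>?A - ?B\<bar> < 2 * e"
    using abs_triangle_ineq[of "?A - dderiv u (dderiv w h) y1" "dderiv w (dderiv u h) y2 - ?B"] a b eq
    by (simp add: abs_minus_commute)
  then show False unfolding e_def by simp
qed

section \<open>Vector fields and sum-of-squares operators\<close>

definition vf_deriv :: "('a::real_normed_vector \<Rightarrow> 'a) \<Rightarrow> ('a \<Rightarrow> real) \<Rightarrow> 'a \<Rightarrow> real" where
  "vf_deriv W g x = dderiv (W x) g x"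

definition smooth_coeffs :: "('a::euclidean_space \<Rightarrow> 'a) \<Rightarrow> bool" where
  "smooth_coeffs W \<longleftrightarrow> (\<forall>b\<in>Basis. smooth (\<lambda>x. W x \<bullet> b))"

lemma vf_deriv_add:
  "g differentiable (at x) \<Longrightarrow> h differentiable (at x) \<Longrightarrow>
   vf_deriv W (\<lambda>y. g y + h y) x = vf_deriv W g x + vf_deriv W h x"
  unfolding vf_deriv_def by (rule dderiv_add)

lemma vf_deriv_mult:
  fixes g h :: "'a::real_normed_vector \<Rightarrow> real"
  shows "g differentiable (at x) \<Longrightarrow> h differentiable (at x) \<Longrightarrow>
   vf_deriv W (\<lambda>y. g y * h y) x = g x * vf_deriv W h x + vf_deriv W g x * h x"
  unfolding vf_deriv_def by (rule dderiv_mult)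

lemma vf_deriv_sum:
  "finite I \<Longrightarrow> (\<And>i. i \<in> I \<Longrightarrow> f i differentiable (at x)) \<Longrightarrow>
   vf_deriv W (\<lambda>y. \<Sum>i\<in>I. f i y) x = (\<Sum>i\<in>I. vf_deriv W (f i) x)"
  unfolding vf_deriv_def by (rule dderiv_sum)

lemma vf_deriv_basis_expansion:
  fixes g :: "'a::euclidean_space \<Rightarrow> real"
  shows "g differentiable (at x) \<Longrightarrow> vf_deriv W g x = (\<Sum>b\<in>Basis. (W x \<bullet> b) * dderiv b g x)"
  unfolding vf_deriv_def by (rule dderiv_basis_expansion)

lemma smooth_vf_deriv:
  assumes g: "smooth g" and W: "smooth_coeffs W"
  shows "smooth (vf_deriv W g)"
proof -
  have "vf_deriv W g = (\<lambda>x. \<Sum>b\<in>Basis. (W x \<bullet> b) * dderiv b g x)"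
    using g by (auto intro!: ext vf_deriv_basis_expansion smooth_imp_differentiable)
  moreover have "smooth (\<lambda>x. \<Sum>b\<in>Basis. (W x \<bullet> b) * dderiv b g x)"
    using W g unfolding smooth_coeffs_def by (intro smooth_sum smooth_mult smooth_dderiv) auto
  ultimately show ?thesis by simp
qed

lemma dderiv_vf_deriv_commute:
  fixes h :: "'a::euclidean_space \<Rightarrow> real"
  assumes h: "smooth h" and W: "smooth_coeffs W"
    and W_const: "\<forall>b\<in>Basis. \<forall>y. dderiv e (\<lambda>y. W y \<bullet> b) y = 0"
  shows "dderiv e (vf_deriv W h) x = vf_deriv W (dderiv e h) x"
proof -
  have "vf_deriv W h = (\<lambda>x. \<Sum>b\<in>Basis. (W x \<bullet> b) * dderiv b h x)"
    using h by (auto intro!: ext vf_deriv_basis_expansion smooth_imp_differentiable)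
  then have "dderiv e (vf_deriv W h) x = (\<Sum>b\<in>Basis. dderiv e (\<lambda>x. (W x \<bullet> b) * dderiv b h x) x)"
    using W h unfolding smooth_coeffs_def
    by (auto intro!: dderiv_sum smooth_imp_differentiable smooth_mult smooth_dderiv)
  also have "\<dots> = (\<Sum>b\<in>Basis. (W x \<bullet> b) * dderiv e (dderiv b h) x)"
    using W h W_const unfolding smooth_coeffs_def
    by (intro sum.cong) (auto simp: dderiv_mult smooth_imp_differentiable smooth_dderiv)
  also have "\<dots> = (\<Sum>b\<in>Basis. (W x \<bullet> b) * dderiv b (dderiv e h) x)"
    using dderiv_commute[OF h] by simp
  also have "\<dots> = vf_deriv W (dderiv e h) x"
    using h by (simp add: vf_deriv_basis_expansion smooth_imp_differentiable smooth_dderiv)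
  finally show ?thesis .
qed

definition hormander_op ::
    "('i::finite \<Rightarrow> 'a::real_normed_vector \<Rightarrow> 'a) \<Rightarrow> ('a \<Rightarrow> 'a) \<Rightarrow> ('a \<Rightarrow> real) \<Rightarrow> 'a \<Rightarrow> real" where
  "hormander_op W W0 g x = (\<Sum>i\<in>UNIV. vf_deriv (W i) (vf_deriv (W i) g) x) + vf_deriv W0 g x"

lemma smooth_hormander_op:
  "smooth g \<Longrightarrow> \<forall>i. smooth_coeffs (W i) \<Longrightarrow> smooth_coeffs W0 \<Longrightarrow> smooth (hormander_op W W0 g)"
  unfolding hormander_op_def[abs_def] by (intro smooth_add smooth_sum smooth_vf_deriv) auto

lemma vf_deriv_vf_deriv_mult:
  assumes g: "smooth g" and h: "smooth h" and W: "smooth_coeffs W"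
  shows "vf_deriv W (vf_deriv W (\<lambda>y. g y * h y)) x =
     g x * vf_deriv W (vf_deriv W h) x + 2 * (vf_deriv W g x * vf_deriv W h x)
       + vf_deriv W (vf_deriv W g) x * h x"
proof -
  have d: "g differentiable (at y)" "h differentiable (at y)"
      "vf_deriv W g differentiable (at y)" "vf_deriv W h differentiable (at y)" for y
    using g h W by (auto intro: smooth_imp_differentiable smooth_vf_deriv)
  have "vf_deriv W (\<lambda>y. g y * h y) = (\<lambda>y. g y * vf_deriv W h y + vf_deriv W g y * h y)"
    using d by (auto intro!: ext vf_deriv_mult)
  then have "vf_deriv W (vf_deriv W (\<lambda>y. g y * h y)) x =
      vf_deriv W (\<lambda>y. g y * vf_deriv W h y) x + vf_deriv W (\<lambda>y. vf_deriv W g y * h y) x"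
    using d by (simp add: vf_deriv_add differentiable_mult)
  then show ?thesis using d by (simp add: vf_deriv_mult algebra_simps)
qed

lemma hormander_op_mult:
  assumes "smooth g" "smooth h" "\<forall>i. smooth_coeffs (W i)"
  shows "hormander_op W W0 (\<lambda>y. g y * h y) x =
     g x * hormander_op W W0 h x + h x * hormander_op W W0 g x
       + 2 * (\<Sum>i\<in>UNIV. vf_deriv (W i) g x * vf_deriv (W i) h x)"
  unfolding hormander_op_def using assms
  by (simp add: vf_deriv_vf_deriv_mult vf_deriv_mult smooth_imp_differentiable
      sum.distrib sum_distrib_left algebra_simps)

lemma hormander_op_sum:
  assumes "finite J" "\<forall>j\<in>J. smooth (g j)" "\<forall>i. smooth_coeffs (W i)"
  shows "hormander_op W W0 (\<lambda>y. \<Sum>j\<in>J. g j y) x = (\<Sum>j\<in>J. hormander_op W W0 (g j) x)"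
proof -
  have "vf_deriv (W i) (\<lambda>y. \<Sum>j\<in>J. g j y) = (\<lambda>y. \<Sum>j\<in>J. vf_deriv (W i) (g j) y)" for i
    using assms by (auto intro!: ext vf_deriv_sum smooth_imp_differentiable)
  then have "vf_deriv (W i) (vf_deriv (W i) (\<lambda>y. \<Sum>j\<in>J. g j y)) x =
      (\<Sum>j\<in>J. vf_deriv (W i) (vf_deriv (W i) (g j)) x)" for i
    using assms by (auto intro!: vf_deriv_sum smooth_imp_differentiable smooth_vf_deriv)
  then show ?thesis
    unfolding hormander_op_def using assms
    by (simp add: vf_deriv_sum smooth_imp_differentiable sum.distrib sum.swap[of _ UNIV])
qed

lemma dderiv_hormander_op_commute:
  fixes h :: "'a::euclidean_space \<Rightarrow> real"
  assumes h: "smooth h" and W: "\<forall>i. smooth_coeffs (W i)" "smooth_coeffs W0"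
    and W_const: "\<forall>i. \<forall>b\<in>Basis. \<forall>y. dderiv e (\<lambda>y. W i y \<bullet> b) y = 0"
    and W0_const: "\<forall>b\<in>Basis. \<forall>y. dderiv e (\<lambda>y. W0 y \<bullet> b) y = 0"
  shows "dderiv e (hormander_op W W0 h) x = hormander_op W W0 (dderiv e h) x"
proof -
  have s: "smooth (vf_deriv (W i) (vf_deriv (W i) h))" "smooth (vf_deriv W0 h)"
      "smooth (vf_deriv (W i) h)" for i
    using h W by (auto intro!: smooth_vf_deriv)
  have "dderiv e (hormander_op W W0 h) x =
      (\<Sum>i\<in>UNIV. dderiv e (vf_deriv (W i) (vf_deriv (W i) h)) x) + dderiv e (vf_deriv W0 h) x"
    unfolding hormander_op_def[abs_def] using s
    by (simp add: dderiv_add dderiv_sum smooth_imp_differentiable differentiable_sum)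
  moreover have "dderiv e (vf_deriv (W i) h) = vf_deriv (W i) (dderiv e h)" for i
    using h W W_const by (auto intro!: ext dderiv_vf_deriv_commute)
  ultimately show ?thesis
    unfolding hormander_op_def using s h W W_const W0_const
    by (simp add: dderiv_vf_deriv_commute)
qed

section \<open>Lifting to functions of (p, \<xi>)\<close>

definition lift_vf :: "(real^'k \<Rightarrow> real^'k) \<Rightarrow> (real^'k) \<times> (real^'k) \<Rightarrow> (real^'k) \<times> (real^'k)" where
  "lift_vf V z = (V (fst z), 0)"

definition xi_axis :: "'k::finite \<Rightarrow> (real^'k) \<times> (real^'k)" where
  "xi_axis j = (0, axis j 1)"

abbreviation pLop :: "('k::finite \<Rightarrow> real^'k \<Rightarrow> real^'k) \<Rightarrow> (real^'k \<Rightarrow> real^'k)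
    \<Rightarrow> ((real^'k) \<times> (real^'k) \<Rightarrow> real) \<Rightarrow> (real^'k) \<times> (real^'k) \<Rightarrow> real" where
  "pLop V V0 \<equiv> hormander_op (\<lambda>i. lift_vf (V i)) (lift_vf V0)"

definition drift :: "(real^'k \<Rightarrow> real^'k) \<Rightarrow> ((real^'k) \<times> (real^'k) \<Rightarrow> real)
    \<Rightarrow> (real^'k) \<times> (real^'k) \<Rightarrow> real" where
  "drift \<sigma> g z = (\<Sum>j\<in>UNIV. \<sigma> (fst z) $ j * dxi j g z)"

lemma vf_app_eq_vf_deriv: "vf_app V = vf_deriv V"
  by (auto simp: vf_app_def vf_deriv_def dderiv_def fun_eq_iff)

lemma pvf_app_eq_vf_deriv: "pvf_app V = vf_deriv (lift_vf V)"
  by (auto simp: pvf_app_def vf_deriv_def dderiv_def lift_vf_def fun_eq_iff)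

lemma dxi_eq_dderiv: "dxi j = dderiv (xi_axis j)"
  by (auto simp: dxi_def dderiv_def xi_axis_def fun_eq_iff)

lemma Lop_eq_hormander_op: "Lop V V0 = hormander_op V V0"
  by (auto simp: Lop_def hormander_op_def vf_app_eq_vf_deriv fun_eq_iff)

lemma calL_eq: "calL V V0 \<sigma> g = (\<lambda>z. pLop V V0 g z + drift \<sigma> g z)"
  by (auto simp: calL_def hormander_op_def drift_def pvf_app_eq_vf_deriv fun_eq_iff)

lemma smooth_dxi: "smooth f \<Longrightarrow> smooth (dxi j f)"
  unfolding dxi_eq_dderiv by (rule smooth_dderiv)

lemma dxi_commute: "smooth f \<Longrightarrow> dxi j (dxi l f) z = dxi l (dxi j f) z"
  unfolding dxi_eq_dderiv by (rule dderiv_commute)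

lemma smooth_vf_component: "smooth_vf V \<Longrightarrow> smooth (\<lambda>p. V p \<bullet> u)"
  unfolding smooth_vf_def inner_vec_def by (auto intro!: smooth_sum smooth_mult smooth_const)

lemma smooth_coeffs_smooth_vf: "smooth_vf V \<Longrightarrow> smooth_coeffs V"
  unfolding smooth_coeffs_def using smooth_vf_component by blast

lemma lift_vf_inner: "lift_vf V z \<bullet> b = V (fst z) \<bullet> fst b"
  by (simp add: lift_vf_def inner_prod_def)

lemma smooth_coeffs_lift_vf: "smooth_vf V \<Longrightarrow> smooth_coeffs (lift_vf V)"
  unfolding smooth_coeffs_def lift_vf_inner using smooth_comp_fst[OF smooth_vf_component] by blast

lemma lift_vf_coeffs_const_along_xi:
  fixes V :: "real^'k::finite \<Rightarrow> real^'k"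
  assumes "smooth_vf V"
  shows "\<forall>b\<in>Basis. \<forall>y. dderiv (xi_axis j) (\<lambda>y. lift_vf V y \<bullet> b) y = 0"
proof (intro ballI allI)
  fix b y :: "(real^'k) \<times> (real^'k)"
  have d: "(\<lambda>p. V p \<bullet> fst b) differentiable (at (fst y))"
    by (rule smooth_imp_differentiable[OF smooth_vf_component[OF assms]])
  show "dderiv (xi_axis j) (\<lambda>y. lift_vf V y \<bullet> b) y = 0"
    unfolding lift_vf_inner dderiv_comp_fst[OF d] by (simp add: xi_axis_def dderiv_zero d)
qed

lemma vf_deriv_slice:
  "(\<And>z. F differentiable (at z)) \<Longrightarrow> vf_deriv V (\<lambda>p. F (p, \<xi>)) = (\<lambda>p. vf_deriv (lift_vf V) F (p, \<xi>))"
  by (auto simp: vf_deriv_def lift_vf_def fun_eq_iff dderiv_slice)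

lemma hormander_op_slice:
  assumes "smooth F" "\<forall>i. smooth_vf (V i)"
  shows "hormander_op V V0 (\<lambda>p. F (p, \<xi>)) p = pLop V V0 F (p, \<xi>)"
proof -
  have "smooth (vf_deriv (lift_vf (V i)) F)" for i
    using assms by (auto intro: smooth_vf_deriv smooth_coeffs_lift_vf)
  then show ?thesis
    unfolding hormander_op_def using assms
    by (simp add: vf_deriv_slice smooth_imp_differentiable lift_vf_def)
qed

lemma differentiable_C1_component:
  assumes "C1_map \<sigma>"
  shows "(\<lambda>q. \<sigma> q $ j) differentiable (at x)"
proof -
  obtain D where "(\<sigma> has_derivative D) (at x)"
    using assms unfolding C1_map_def differentiable_def by blast
  from bounded_linear.has_derivative[OF bounded_linear_vec_nth this, of j]
  show ?thesis unfolding differentiable_def by blast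
qed

lemma differentiable_drift_coeff:
  "C1_map \<sigma> \<Longrightarrow> (\<lambda>z. \<sigma> (fst z) $ j) differentiable (at z)"
  by (rule differentiable_comp_fst[OF differentiable_C1_component])

lemma differentiable_drift:
  "C1_map \<sigma> \<Longrightarrow> smooth f \<Longrightarrow> drift \<sigma> f differentiable (at z)"
  unfolding drift_def[abs_def]
  by (intro differentiable_sum differentiable_mult differentiable_drift_coeff ballI
      smooth_imp_differentiable smooth_dxi) auto

lemma drift_sum:
  assumes "finite J" "\<And>j. j \<in> J \<Longrightarrow> g j differentiable (at z)"
  shows "drift \<sigma> (\<lambda>w. \<Sum>j\<in>J. g j w) z = (\<Sum>j\<in>J. drift \<sigma> (g j) z)"
  unfolding drift_def dxi_eq_dderiv using assms
  by (simp add: dderiv_sum sum_distrib_left sum.swap[of _ UNIV])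

lemma drift_power2:
  "g differentiable (at z) \<Longrightarrow> drift \<sigma> (\<lambda>w. (g w)\<^sup>2) z = 2 * g z * drift \<sigma> g z"
  unfolding drift_def dxi_eq_dderiv
  by (simp add: dderiv_power2 sum_distrib_left algebra_simps)

lemma vf_deriv_drift:
  assumes V: "smooth_vf V" and \<sigma>: "C1_map \<sigma>" and f: "smooth f"
  shows "vf_deriv (lift_vf V) (drift \<sigma> f) z =
     drift \<sigma> (vf_deriv (lift_vf V) f) z + (\<Sum>j\<in>UNIV. vf_app V (\<lambda>q. \<sigma> q $ j) (fst z) * dxi j f z)"
proof -
  have d: "dxi j f differentiable (at y)" for j y by (intro smooth_imp_differentiable smooth_dxi f)
  have X\<sigma>: "vf_deriv (lift_vf V) (\<lambda>z. \<sigma> (fst z) $ j) z = vf_app V (\<lambda>q. \<sigma> q $ j) (fst z)" for j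
    unfolding vf_deriv_def vf_app_eq_vf_deriv lift_vf_def
    by (simp add: dderiv_comp_fst[OF differentiable_C1_component[OF \<sigma>]])
  have Xdxi: "vf_deriv (lift_vf V) (dxi j f) z = dxi j (vf_deriv (lift_vf V) f) z" for j
    unfolding dxi_eq_dderiv
    by (rule dderiv_vf_deriv_commute[symmetric, OF f smooth_coeffs_lift_vf[OF V]
          lift_vf_coeffs_const_along_xi[OF V]])
  show ?thesis
    unfolding drift_def[abs_def] using d
    by (simp add: vf_deriv_sum vf_deriv_mult differentiable_mult differentiable_drift_coeff[OF \<sigma>]
        X\<sigma> Xdxi sum.distrib algebra_simps)
qed

lemma dxi_drift:
  assumes \<sigma>: "C1_map \<sigma>" and f: "smooth f"
  shows "dxi l (drift \<sigma> f) z = drift \<sigma> (dxi l f) z"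
proof -
  have d: "dxi j f differentiable (at y)" for j y by (intro smooth_imp_differentiable smooth_dxi f)
  have "dderiv (xi_axis l) (\<lambda>z. \<sigma> (fst z) $ j) z = 0" for j
    unfolding dderiv_comp_fst[OF differentiable_C1_component[OF \<sigma>]]
    by (simp add: xi_axis_def dderiv_zero differentiable_C1_component[OF \<sigma>])
  then show ?thesis
    unfolding drift_def[abs_def] using d dxi_commute[OF f]
    by (simp add: dxi_eq_dderiv dderiv_sum dderiv_mult differentiable_mult
        differentiable_drift_coeff[OF \<sigma>])
qed

section \<open>Carre du champ computations\<close>

lemma GammaL_bil_eq:
  assumes "\<forall>i. smooth_vf (V i)" "smooth g" "smooth h"
  shows "GammaL_bil V V0 g h q = (\<Sum>i\<in>UNIV. vf_app (V i) g q * vf_app (V i) h q)"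
  unfolding GammaL_bil_def Lop_eq_hormander_op vf_app_eq_vf_deriv using assms
  by (simp add: hormander_op_mult smooth_coeffs_smooth_vf)

lemma GammaL_eq:
  assumes "\<forall>i. smooth_vf (V i)" "smooth g"
  shows "GammaL V V0 g q = (\<Sum>i\<in>UNIV. (vf_app (V i) g q)\<^sup>2)"
  using hormander_op_mult[of g g, where W=V] assms
  unfolding GammaL_def Lop_eq_hormander_op vf_app_eq_vf_deriv
  by (simp add: smooth_coeffs_smooth_vf power2_eq_square)

lemma GammaL_slice:
  assumes "\<forall>i. smooth_vf (V i)" "smooth f"
  shows "GammaL V V0 (\<lambda>q. f (q, \<xi>)) p = (\<Sum>i\<in>UNIV. (pvf_app (V i) f (p, \<xi>))\<^sup>2)"
  using assms
  by (simp add: GammaL_eq smooth_slice vf_app_eq_vf_deriv pvf_app_eq_vf_deriv vf_deriv_slice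
      smooth_imp_differentiable)

lemma Gamma_eq:
  assumes "\<forall>i. smooth_vf (V i)" "smooth f"
  shows "Gamma V V0 \<sigma> f z = (\<Sum>i\<in>UNIV. (pvf_app (V i) f z)\<^sup>2)"
proof -
  have "pLop V V0 (\<lambda>w. (f w)\<^sup>2) z = 2 * f z * pLop V V0 f z
      + 2 * (\<Sum>i\<in>UNIV. (vf_deriv (lift_vf (V i)) f z)\<^sup>2)"
    using hormander_op_mult[of f f "\<lambda>i. lift_vf (V i)" "lift_vf V0" z] assms
    by (simp add: smooth_coeffs_lift_vf power2_eq_square)
  then show ?thesis
    unfolding Gamma_def calL_eq pvf_app_eq_vf_deriv
    using drift_power2[OF smooth_imp_differentiable[OF assms(2)]] by (simp add: algebra_simps)
qed

lemma Gamma2L_slice: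
  assumes V: "\<forall>i. smooth_vf (V i)" and V0: "smooth_vf V0" and f: "smooth f"
  shows "Gamma2L V V0 (\<lambda>q. f (q, \<xi>)) p =
     (pLop V V0 (\<lambda>z. \<Sum>i\<in>UNIV. (pvf_app (V i) f z)\<^sup>2) (p, \<xi>)
       - 2 * (\<Sum>i\<in>UNIV. pvf_app (V i) f (p, \<xi>) * pvf_app (V i) (pLop V V0 f) (p, \<xi>))) / 2"
proof -
  have cs: "\<forall>i. smooth_coeffs (lift_vf (V i))" "smooth_coeffs (lift_vf V0)"
    using V V0 by (auto intro: smooth_coeffs_lift_vf)
  have Lf: "smooth (pLop V V0 f)" by (rule smooth_hormander_op[OF f cs])
  have G: "smooth (\<lambda>z. \<Sum>i\<in>UNIV. (pvf_app (V i) f z)\<^sup>2)"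
    unfolding pvf_app_eq_vf_deriv
    by (intro smooth_sum smooth_power2 smooth_vf_deriv f) (use cs in auto)
  have "GammaL V V0 (\<lambda>q. f (q, \<xi>)) = (\<lambda>q. \<Sum>i\<in>UNIV. (pvf_app (V i) f (q, \<xi>))\<^sup>2)"
    using GammaL_slice[OF V f] by auto
  then have "Lop V V0 (GammaL V V0 (\<lambda>q. f (q, \<xi>))) p =
      pLop V V0 (\<lambda>z. \<Sum>i\<in>UNIV. (pvf_app (V i) f z)\<^sup>2) (p, \<xi>)"
    unfolding Lop_eq_hormander_op using hormander_op_slice[OF G V] by simp
  moreover have "Lop V V0 (\<lambda>q. f (q, \<xi>)) = (\<lambda>q. pLop V V0 f (q, \<xi>))"
    unfolding Lop_eq_hormander_op using hormander_op_slice[OF f V] by auto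
  moreover have "GammaL_bil V V0 (\<lambda>q. f (q, \<xi>)) (\<lambda>q. pLop V V0 f (q, \<xi>)) p =
      (\<Sum>i\<in>UNIV. pvf_app (V i) f (p, \<xi>) * pvf_app (V i) (pLop V V0 f) (p, \<xi>))"
    using V f Lf
    by (simp add: GammaL_bil_eq smooth_slice vf_app_eq_vf_deriv pvf_app_eq_vf_deriv vf_deriv_slice
        smooth_imp_differentiable)
  ultimately show ?thesis unfolding Gamma2L_def by simp
qed

lemma Gamma2_eq:
  assumes V: "\<forall>i. smooth_vf (V i)" and V0: "smooth_vf V0" and \<sigma>: "C1_map \<sigma>" and f: "smooth f"
  shows "Gamma2 V V0 \<sigma> f (p, \<xi>) = Gamma2L V V0 (\<lambda>q. f (q, \<xi>)) p
     - (\<Sum>i\<in>UNIV. \<Sum>j\<in>UNIV. pvf_app (V i) f (p, \<xi>) * vf_app (V i) (\<lambda>q. \<sigma> q $ j) p * dxi j f (p, \<xi>))"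
proof -
  let ?X = "\<lambda>i. vf_deriv (lift_vf (V i))"
  define z where "z = (p, \<xi>)"
  define a where "a i = ?X i f z" for i
  define G where "G w = (\<Sum>i\<in>UNIV. (?X i f w)\<^sup>2)" for w
  have cs: "\<forall>i. smooth_coeffs (lift_vf (V i))" "smooth_coeffs (lift_vf V0)"
    using V V0 by (auto intro: smooth_coeffs_lift_vf)
  have X: "smooth (?X i f)" for i using cs f by (auto intro: smooth_vf_deriv)
  have "Gamma V V0 \<sigma> f = G"
    using Gamma_eq[OF V f] unfolding G_def pvf_app_eq_vf_deriv by auto
  moreover have "drift \<sigma> G z = 2 * (\<Sum>i\<in>UNIV. a i * drift \<sigma> (?X i f) z)"
    unfolding G_def a_def using X
    by (simp add: drift_sum drift_power2 smooth_imp_differentiable sum_distrib_left mult.assoc)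
  moreover have "?X i (calL V V0 \<sigma> f) z = ?X i (pLop V V0 f) z + drift \<sigma> (?X i f) z
      + (\<Sum>j\<in>UNIV. vf_app (V i) (\<lambda>q. \<sigma> q $ j) p * dxi j f z)" for i
    unfolding calL_eq using V \<sigma> f cs
    by (simp add: vf_deriv_add vf_deriv_drift smooth_imp_differentiable smooth_hormander_op
        differentiable_drift z_def)
  then have "Gamma_bil V f (calL V V0 \<sigma> f) z = (\<Sum>i\<in>UNIV. a i * ?X i (pLop V V0 f) z)
      + (\<Sum>i\<in>UNIV. a i * drift \<sigma> (?X i f) z)
      + (\<Sum>i\<in>UNIV. \<Sum>j\<in>UNIV. a i * vf_app (V i) (\<lambda>q. \<sigma> q $ j) p * dxi j f z)"
    unfolding Gamma_bil_def pvf_app_eq_vf_deriv a_def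
    by (simp add: distrib_left sum.distrib sum_distrib_left mult.assoc)
  moreover have "Gamma2L V V0 (\<lambda>q. f (q, \<xi>)) p =
      (pLop V V0 G z - 2 * (\<Sum>i\<in>UNIV. a i * ?X i (pLop V V0 f) z)) / 2"
    using Gamma2L_slice[OF V V0 f] unfolding G_def a_def z_def pvf_app_eq_vf_deriv .
  ultimately show ?thesis
    unfolding Gamma2_def calL_eq a_def z_def pvf_app_eq_vf_deriv by (simp add: field_simps)
qed

lemma calL_sum:
  assumes "\<forall>i. smooth_vf (V i)" "finite J" "\<forall>j\<in>J. smooth (g j)"
  shows "calL V V0 \<sigma> (\<lambda>w. \<Sum>j\<in>J. g j w) z = (\<Sum>j\<in>J. calL V V0 \<sigma> (g j) z)"
  unfolding calL_eq using assms
  by (simp add: hormander_op_sum drift_sum smooth_coeffs_lift_vf smooth_imp_differentiable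
      sum.distrib)

lemma dxi_calL:
  assumes V: "\<forall>i. smooth_vf (V i)" and V0: "smooth_vf V0" and \<sigma>: "C1_map \<sigma>" and f: "smooth f"
  shows "dxi j (calL V V0 \<sigma> f) z = calL V V0 \<sigma> (dxi j f) z"
proof -
  have cs: "\<forall>i. smooth_coeffs (lift_vf (V i))" "smooth_coeffs (lift_vf V0)"
    using V V0 by (auto intro: smooth_coeffs_lift_vf)
  have "dxi j (pLop V V0 f) z = pLop V V0 (dxi j f) z"
    unfolding dxi_eq_dderiv using V V0
    by (intro dderiv_hormander_op_commute f cs allI lift_vf_coeffs_const_along_xi) auto
  moreover have "dxi j (\<lambda>z. pLop V V0 f z + drift \<sigma> f z) z = dxi j (pLop V V0 f) z + dxi j (drift \<sigma> f) z"
    unfolding dxi_eq_dderiv using f \<sigma> cs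
    by (intro dderiv_add smooth_imp_differentiable smooth_hormander_op differentiable_drift)
  ultimately show ?thesis
    unfolding calL_eq by (simp add: dxi_drift[OF \<sigma> f])
qed

lemma Gamma2Z_eq:
  assumes V: "\<forall>i. smooth_vf (V i)" and V0: "smooth_vf V0" and \<sigma>: "C1_map \<sigma>" and f: "smooth f"
  shows "Gamma2Z V V0 \<sigma> f z = (\<Sum>j\<in>UNIV. Gamma V V0 \<sigma> (dxi j f) z)"
proof -
  have "calL V V0 \<sigma> (GammaZ f) z = (\<Sum>j\<in>UNIV. calL V V0 \<sigma> (\<lambda>w. (dxi j f w)\<^sup>2) z)"
    unfolding GammaZ_def[abs_def] using V f
    by (intro calL_sum smooth_power2 smooth_dxi ballI) auto
  also have "\<dots> = (\<Sum>j\<in>UNIV. 2 * dxi j f z * calL V V0 \<sigma> (dxi j f) z + 2 * Gamma V V0 \<sigma> (dxi j f) z)"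
    by (intro sum.cong) (simp_all add: Gamma_def field_simps)
  finally have "calL V V0 \<sigma> (GammaZ f) z = 2 * (\<Sum>j\<in>UNIV. dxi j f z * calL V V0 \<sigma> (dxi j f) z)
      + 2 * (\<Sum>j\<in>UNIV. Gamma V V0 \<sigma> (dxi j f) z)"
    by (simp add: sum.distrib sum_distrib_left mult.assoc)
  then show ?thesis
    unfolding Gamma2Z_def GammaZ_bil_def dxi_calL[OF V V0 \<sigma> f] by simp
qed

lemma bilinear_sum_le_Frobenius_bound:
  fixes a :: "'i::finite \<Rightarrow> real" and b :: "'j::finite \<Rightarrow> real" and M :: "'i \<Rightarrow> 'j \<Rightarrow> real"
  assumes C: "sqrt (\<Sum>i\<in>UNIV. \<Sum>j\<in>UNIV. (M i j)\<^sup>2) \<le> C"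
  shows "(\<Sum>i\<in>UNIV. \<Sum>j\<in>UNIV. a i * M i j * b j) \<le> C / 2 * ((\<Sum>i\<in>UNIV. (a i)\<^sup>2) + (\<Sum>j\<in>UNIV. (b j)\<^sup>2))"
proof -
  define A where "A = (\<Sum>i\<in>UNIV. (a i)\<^sup>2)"
  define B where "B = (\<Sum>j\<in>UNIV. (b j)\<^sup>2)"
  define Q where "Q = (\<Sum>i\<in>UNIV. \<Sum>j\<in>UNIV. (M i j)\<^sup>2)"
  define S where "S = (\<Sum>i\<in>UNIV. \<Sum>j\<in>UNIV. a i * M i j * b j)"
  have nonneg: "A \<ge> 0" "B \<ge> 0" "Q \<ge> 0" unfolding A_def B_def Q_def by (auto intro!: sum_nonneg)
  have "C \<ge> 0" using C real_sqrt_ge_zero[OF nonneg(3)] unfolding Q_def by linarith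
  have "S = (\<Sum>x\<in>UNIV \<times> UNIV. M (fst x) (snd x) * (a (fst x) * b (snd x)))"
    unfolding S_def sum.cartesian_product by (simp add: case_prod_beta mult_ac)
  moreover have "Q = (\<Sum>x\<in>UNIV \<times> UNIV. (M (fst x) (snd x))\<^sup>2)"
    unfolding Q_def sum.cartesian_product by (simp add: case_prod_beta)
  moreover have "A * B = (\<Sum>x\<in>UNIV \<times> UNIV. (a (fst x) * b (snd x))\<^sup>2)"
    unfolding A_def B_def sum_product sum.cartesian_product
    by (simp add: case_prod_beta power_mult_distrib)
  ultimately have "S\<^sup>2 \<le> Q * (A * B)" by (simp only: Cauchy_Schwarz_ineq_sum)
  then have "S \<le> sqrt Q * sqrt (A * B)"
    using real_le_rsqrt[of S "Q * (A * B)"] by (simp add: real_sqrt_mult)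
  also have "\<dots> \<le> C * ((A + B) / 2)"
    using C nonneg \<open>C \<ge> 0\<close> by (intro mult_mono arith_geo_mean_sqrt) (auto simp: Q_def)
  finally show ?thesis unfolding S_def A_def B_def by simp
qed

theorem theorem4p1:
  fixes V :: "'k::finite \<Rightarrow> real^'k \<Rightarrow> real^'k"
    and V0 :: "real^'k \<Rightarrow> real^'k"
    and \<sigma> :: "real^'k \<Rightarrow> real^'k"
    and \<rho> :: real
  assumes V_smooth: "\<forall>i. smooth_vf (V i)"
    and V0_smooth: "smooth_vf V0"
    and \<sigma>_C1: "C1_map \<sigma>"
    and C\<sigma>_finite: "bdd_above (range (sigma_grad_norm V \<sigma>))"
    and curv: "\<forall>g :: real^'k \<Rightarrow> real. smooth g \<longrightarrow>
                 (\<forall>p. Gamma2L V V0 g p \<ge> \<rho> * GammaL V V0 g p)"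
  shows "\<forall>f :: (real^'k) \<times> (real^'k) \<Rightarrow> real. smooth f \<longrightarrow>
           (\<forall>z. Gamma2 V V0 \<sigma> f z \<ge>
                  (\<rho> - (SUP p. sigma_grad_norm V \<sigma> p) / 2) * Gamma V V0 \<sigma> f z
                  - (SUP p. sigma_grad_norm V \<sigma> p) / 2 * GammaZ f z
                \<and> Gamma2Z V V0 \<sigma> f z \<ge> 0)"
proof (intro allI impI conjI)
  fix f :: "(real^'k) \<times> (real^'k) \<Rightarrow> real" and z :: "(real^'k) \<times> (real^'k)"
  assume f: "smooth f"
  obtain p \<xi> where z: "z = (p, \<xi>)" by fastforce
  define C where "C = (SUP p. sigma_grad_norm V \<sigma> p)"
  have "Gamma V V0 \<sigma> f z = GammaL V V0 (\<lambda>q. f (q, \<xi>)) p"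
    unfolding z using Gamma_eq[OF V_smooth f] GammaL_slice[OF V_smooth f] by simp
  then have "\<rho> * Gamma V V0 \<sigma> f z \<le> Gamma2L V V0 (\<lambda>q. f (q, \<xi>)) p"
    using curv smooth_slice[OF f] by simp
  moreover have "sigma_grad_norm V \<sigma> p \<le> C"
    unfolding C_def by (rule cSUP_upper[OF _ C\<sigma>_finite]) simp
  then have "(\<Sum>i\<in>UNIV. \<Sum>j\<in>UNIV. pvf_app (V i) f z * vf_app (V i) (\<lambda>q. \<sigma> q $ j) p * dxi j f z)
      \<le> C / 2 * (Gamma V V0 \<sigma> f z + GammaZ f z)"
    unfolding Gamma_eq[OF V_smooth f] GammaZ_def
    by (intro bilinear_sum_le_Frobenius_bound) (simp add: sigma_grad_norm_def)
  ultimately show "(\<rho> - C / 2) * Gamma V V0 \<sigma> f z - C / 2 * GammaZ f z \<le> Gamma2 V V0 \<sigma> f z"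
    unfolding z Gamma2_eq[OF V_smooth V0_smooth \<sigma>_C1 f] by (simp add: algebra_simps)
  show "Gamma2Z V V0 \<sigma> f z \<ge> 0"
    unfolding Gamma2Z_eq[OF V_smooth V0_smooth \<sigma>_C1 f] Gamma_eq[OF V_smooth smooth_dxi[OF f]]
    by (intro sum_nonneg) auto
qed

end
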